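(* Let $\xi$ be a jumping number of $\mathfrak a$ and let $F$ be an antinef divisor with integer coefficients such that $\xi=\xi_F$. Then there is a vertex $\nu$ with $\lambda(F,D;\nu)=\xi$ such that $v_\Gamma(\nu)\ge3$ or $\widehat d_\nu>0$. In particular every jumping number of $\mathfrak a$ lies in $\mathcal H^{\mathfrak a}_\nu$ for some vertex $\nu$ which is a star or satisfies $\widehat d_\nu>0$.
   Context: Setting: $R$ two-dimensional regular local ring with algebraically closed residue field; $\mathfrak a\subset R$ a proper nonzero complete ideal of finite colength; $\pi:X=X_{N+1}\to\cdots\to X_1=\operatorname{Spec}R$ a composition of point blowups with $\mathfrak a\mathcal O_X=\mathcal O_X(-D)$. $E_\nu$ strict, $E^*_\nu$ total transforms of exceptional divisors. Basis $\widehat E_\nu$ with $E_\mu\cdot\widehat E_\nu=-\delta_{\mu,\nu}$; $\mathfrak p_\nu$ the simple complete ideal with $\mathfrak p_\nu\mathcal O_X=\mathcal O_X(-\widehat E_\nu)$; $\mathfrak a=\prod\mathfrak p_\nu^{\widehat d_\nu}$, $D=\sum\widehat d_\nu\widehat E_\nu=\sum d_\nu E_\nu$. A divisor $F=\sum f_\nu E_\nu$ is antinef if $F\cdot E_\nu\le0$ for all $\nu$. Canonical divisor $K=\sum E^*_\nu=\sum k_\nu E_\nu$. Dual graph $\Gamma$ on vertices $1..N$, $\gamma\sim\eta$ iff $\gamma\neq\eta$ and $E_\gamma\cap E_\eta\ne\emptyset$; $v_\Gamma(\nu)$ = number of adjacent vertices; a star is a vertex of valence $\ge3$. $\lambda(F,D;\nu)=(f_\nu+k_\nu+1)/d_\nu$,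 $\xi_F=\min_\nu\lambda(F,D;\nu)$; the jumping numbers of $\mathfrak a$ (the values where the multiplier ideals $\mathcal J(\mathfrak a^\xi)=\Gamma(X,\mathcal O_X(K-\lfloor\xi D\rfloor))$ jump) are exactly the numbers $\xi_F$ with $F$ antinef with integer coefficients. $\mathcal H^{\mathfrak a}_\nu=\{\xi_F\mid F\text{ antinef},\ \xi_F=\lambda(F,D;\nu)\}$. *)

theory Defs
  imports Complex_Main
begin

text \<open>
The sequence of point blowups
X_{N+1} -> ... -> X_1 = Spec R is encoded by its proximity relation:
prox i j (for 1 <= j < i <= N) means that the centre p_i (a point of X_i)
lies on the strict transform of E_j in X_i. Divisors supported on the
exceptional locus are coefficient functions F :: nat => int in the basis
E_1 .. E_N of strict transforms (values outside 1..N are ignored).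
\<close>

text \<open>blow_adj prox i j k: the strict transforms of E_j and E_k (j,k < i)
meet in X_i.  Blowing up p_i separates the two components through p_i (if
p_i is a satellite point) and the new divisor E_i meets exactly the
components through p_i.\<close>
fun blow_adj :: "(nat \<Rightarrow> nat \<Rightarrow> bool) \<Rightarrow> nat \<Rightarrow> nat \<Rightarrow> nat \<Rightarrow> bool" where
  "blow_adj prox 0 j k = False"
| "blow_adj prox (Suc i) j k =
     (if i = 0 then False else
       ((j < i \<and> k < i \<and> blow_adj prox i j k \<and> \<not> (prox i j \<and> prox i k))
        \<or> (j = i \<and> k < i \<and> prox i k)
        \<or> (k = i \<and> j < i \<and> prox i j)))"

text \<open>Valid sequences of N point blowups (residue field algebraically closed):
each p_i, i >= 2, lies on the exceptional locus of X_i -> X_1 and is either a free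
point on exactly one component, or the intersection point of two components.\<close>
definition valid_blowups :: "(nat \<Rightarrow> nat \<Rightarrow> bool) \<Rightarrow> nat \<Rightarrow> bool" where
  "valid_blowups prox N \<longleftrightarrow>
     (\<forall>i j. prox i j \<longrightarrow> 1 \<le> j \<and> j < i \<and> i \<le> N) \<and>
     (\<forall>i\<in>{2..N}. (\<exists>j. {j'. prox i j'} = {j}) \<or>
                  (\<exists>j k. j \<noteq> k \<and> {j'. prox i j'} = {j, k} \<and> blow_adj prox i j k))"

definition dual_adj :: "(nat \<Rightarrow> nat \<Rightarrow> bool) \<Rightarrow> nat \<Rightarrow> nat \<Rightarrow> nat \<Rightarrow> bool" where
  "dual_adj prox N \<gamma> \<eta> \<longleftrightarrow> \<gamma> \<noteq> \<eta> \<and> blow_adj prox (Suc N) \<gamma> \<eta>"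

definition valence :: "(nat \<Rightarrow> nat \<Rightarrow> bool) \<Rightarrow> nat \<Rightarrow> nat \<Rightarrow> nat" where
  "valence prox N \<nu> = card {\<eta> \<in> {1..N}. dual_adj prox N \<nu> \<eta>}"

text \<open>Intersection numbers E_mu . E_nu, computed from
E_nu = E*_nu - (sum of E*_mu, mu proximate to nu) and E*_mu . E*_nu = - delta.\<close>
definition inum :: "(nat \<Rightarrow> nat \<Rightarrow> bool) \<Rightarrow> nat \<Rightarrow> nat \<Rightarrow> nat \<Rightarrow> int" where
  "inum prox N \<mu> \<nu> =
     (if \<mu> = \<nu> then - 1 - int (card {\<alpha> \<in> {1..N}. prox \<alpha> \<nu>})
      else (if prox \<nu> \<mu> \<or> prox \<mu> \<nu> then 1 else 0)
           - int (card {\<alpha> \<in> {1..N}. prox \<alpha> \<mu> \<and> prox \<alpha> \<nu>}))"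

definition dotE :: "(nat \<Rightarrow> nat \<Rightarrow> bool) \<Rightarrow> nat \<Rightarrow> (nat \<Rightarrow> int) \<Rightarrow> nat \<Rightarrow> int" where
  "dotE prox N F \<nu> = (\<Sum>\<mu>\<in>{1..N}. F \<mu> * inum prox N \<mu> \<nu>)"

definition antinef :: "(nat \<Rightarrow> nat \<Rightarrow> bool) \<Rightarrow> nat \<Rightarrow> (nat \<Rightarrow> int) \<Rightarrow> bool" where
  "antinef prox N F \<longleftrightarrow> (\<forall>\<nu>\<in>{1..N}. dotE prox N F \<nu> \<le> 0)"

text \<open>hat d_nu = - D . E_nu, so that D = sum hat d_nu hat E_nu.\<close>
definition dhat :: "(nat \<Rightarrow> nat \<Rightarrow> bool) \<Rightarrow> nat \<Rightarrow> (nat \<Rightarrow> int) \<Rightarrow> nat \<Rightarrow> int" where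
  "dhat prox N D \<nu> = - dotE prox N D \<nu>"

text \<open>estar prox N nu gamma: coefficient of E_gamma in the total transform E*_nu,
via E*_nu = E_nu + sum of E*_mu over mu proximate to nu.\<close>
function estar :: "(nat \<Rightarrow> nat \<Rightarrow> bool) \<Rightarrow> nat \<Rightarrow> nat \<Rightarrow> nat \<Rightarrow> int" where
  "estar prox N \<nu> \<gamma> =
     (if N < \<nu> then 0
      else (if \<gamma> = \<nu> then 1 else 0) +
           (\<Sum>\<mu>\<in>{\<mu>. \<nu> < \<mu> \<and> \<mu> \<le> N \<and> prox \<mu> \<nu>}. estar prox N \<mu> \<gamma>))"
  by pat_completeness auto
termination
  by (relation "measure (\<lambda>(prox, N, \<nu>, \<gamma>). Suc N - \<nu>)") auto

text \<open>k_nu: coefficient of E_nu in K = sum of the E*_rho.\<close>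
definition kcoef :: "(nat \<Rightarrow> nat \<Rightarrow> bool) \<Rightarrow> nat \<Rightarrow> nat \<Rightarrow> int" where
  "kcoef prox N \<nu> = (\<Sum>\<rho>\<in>{1..N}. estar prox N \<rho> \<nu>)"

definition lam :: "(nat \<Rightarrow> nat \<Rightarrow> bool) \<Rightarrow> nat \<Rightarrow> (nat \<Rightarrow> int) \<Rightarrow> (nat \<Rightarrow> int) \<Rightarrow> nat \<Rightarrow> real" where
  "lam prox N F D \<nu> = real_of_int (F \<nu> + kcoef prox N \<nu> + 1) / real_of_int (D \<nu>)"

definition xi :: "(nat \<Rightarrow> nat \<Rightarrow> bool) \<Rightarrow> nat \<Rightarrow> (nat \<Rightarrow> int) \<Rightarrow> (nat \<Rightarrow> int) \<Rightarrow> real" where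
  "xi prox N F D = Min ((lam prox N F D) ` {1..N})"

text \<open>Jumping numbers of the ideal corresponding to D: the xi_F, F antinef integral.\<close>
definition jumping_numbers :: "(nat \<Rightarrow> nat \<Rightarrow> bool) \<Rightarrow> nat \<Rightarrow> (nat \<Rightarrow> int) \<Rightarrow> real set" where
  "jumping_numbers prox N D = {xi prox N F D | F. antinef prox N F}"

definition Hset :: "(nat \<Rightarrow> nat \<Rightarrow> bool) \<Rightarrow> nat \<Rightarrow> (nat \<Rightarrow> int) \<Rightarrow> nat \<Rightarrow> real set" where
  "Hset prox N D \<nu> = {xi prox N F D | F. antinef prox N F \<and> xi prox N F D = lam prox N F D \<nu>}"

end

theory Submission
  imports Defs
begin

text \<open>
  Let \<open>\<xi> = \<xi>\<^sub>F\<close> and \<open>h = F + K + 1 - \<xi> D\<close>. Since an antinef \<open>D \<noteq> 0\<close> has positive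
  coefficients, \<open>h \<ge> 0\<close> coefficientwise, with \<open>h\<^sub>\<nu> = 0\<close> exactly where \<open>\<lambda>(F, D; \<nu>) = \<xi>\<close>.
  The adjunction formula \<open>K \<cdot> E\<^sub>\<nu> = -2 - E\<^sub>\<nu>\<^sup>2\<close> gives
  \<open>h \<cdot> E\<^sub>\<nu> = F \<cdot> E\<^sub>\<nu> + \<xi> dhat\<^sub>\<nu> + v\<^sub>\<Gamma>(\<nu>) - 2\<close>, while for \<open>h\<^sub>\<nu> = 0\<close> the left-hand side
  is the sum of \<open>h\<close> over the neighbours of \<open>\<nu>\<close>. As \<open>F \<cdot> E\<^sub>\<nu> \<le> 0\<close>, if at a minimising vertex
  \<open>v\<^sub>\<Gamma>(\<nu>) \<le> 2\<close> and \<open>dhat\<^sub>\<nu> = 0\<close>, then \<open>v\<^sub>\<Gamma>(\<nu>) = 2\<close> and \<open>h\<close> vanishes at all neighbours of \<open>\<nu>\<close>.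
  If this happened at every minimising vertex, connectedness of \<open>\<Gamma>\<close> would make every vertex
  minimising of valence 2, but \<open>\<Gamma>\<close> has a vertex of valence at most 1.
\<close>

section \<open>Proximity\<close>

definition free_point :: "(nat \<Rightarrow> nat \<Rightarrow> bool) \<Rightarrow> nat \<Rightarrow> bool" where
  "free_point prox i \<longleftrightarrow> (\<exists>j. {j'. prox i j'} = {j})"

lemma prox_bounds: "valid_blowups prox N \<Longrightarrow> prox i j \<Longrightarrow> 1 \<le> j \<and> j < i \<and> i \<le> N"
  unfolding valid_blowups_def by blast

lemma blow_adj_sym: "blow_adj prox m j k = blow_adj prox m k j"
  by (induction m) auto

lemma blow_adj_less: "blow_adj prox m j k \<Longrightarrow> k < m"
  by (induction m arbitrary: j k) (auto split: if_splits dest: less_SucI)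

lemma blow_adj_Suc:
  "1 \<le> i \<Longrightarrow> blow_adj prox (Suc i) j k \<longleftrightarrow>
     (j < i \<and> k < i \<and> blow_adj prox i j k \<and> \<not> (prox i j \<and> prox i k))
     \<or> (j = i \<and> k < i \<and> prox i k) \<or> (k = i \<and> j < i \<and> prox i j)"
  by simp

declare blow_adj.simps(2)[simp del]

lemma dual_adj_sym: "dual_adj prox N a b = dual_adj prox N b a"
  unfolding dual_adj_def using blow_adj_sym by blast

lemma free_or_satellite:
  assumes "valid_blowups prox N" "i \<in> {2..N}" "\<not> free_point prox i"
  obtains j k where "j \<noteq> k" "{j'. prox i j'} = {j, k}" "blow_adj prox i j k"
  using assms unfolding valid_blowups_def free_point_def by blast

lemma prox_ex:
  assumes v: "valid_blowups prox N" and "2 \<le> i" "i \<le> N"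
  obtains j where "prox i j"
proof (cases "free_point prox i")
  case True then show ?thesis using that unfolding free_point_def by blast
next
  case False
  with assms obtain j k where "{j'. prox i j'} = {j, k}" by (auto elim: free_or_satellite)
  then show ?thesis using that by blast
qed

lemma prox_two_blow_adj:
  assumes v: "valid_blowups prox N" and "prox i j" "prox i k" "j \<noteq> k"
  shows "blow_adj prox i j k"
proof -
  have i: "i \<in> {2..N}" using prox_bounds[OF v assms(2)] by auto
  have "\<not> free_point prox i"
  proof
    assume "free_point prox i"
    then obtain c where "{j'. prox i j'} = {c}" unfolding free_point_def by blast
    then have "j = c" "k = c" using assms(2,3) by (metis mem_Collect_eq singletonD)+
    then show False using assms(4) by simp
  qed
  then obtain a b where "{j'. prox i j'} = {a, b}" "blow_adj prox i a b"
    using free_or_satellite[OF v i] by blast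
  moreover have "j \<in> {a, b}" "k \<in> {a, b}" using assms(2,3) calculation(1) by auto
  ultimately show ?thesis using assms(4) blow_adj_sym by auto
qed

section \<open>Intersection numbers\<close>

lemma sum_if_one_eq_card: "finite A \<Longrightarrow> (\<Sum>x\<in>A. if P x then 1 else 0 :: int) = int (card {x\<in>A. P x})"
  by (simp add: sum.inter_filter[symmetric])

lemma card_filter_atLeastLessThan_Suc:
  "card {\<alpha>\<in>{1..<Suc m}. P \<alpha>} = card {\<alpha>\<in>{1..<m}. P \<alpha>} + (if P m \<and> 1 \<le> m then 1 else 0)"
proof -
  have "{\<alpha>\<in>{1..<Suc m}. P \<alpha>} = {\<alpha>\<in>{1..<m}. P \<alpha>} \<union> (if P m \<and> 1 \<le> m then {m} else {})"
    by (auto simp: less_Suc_eq)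
  then show ?thesis by auto
qed

text \<open>The formula defining \<^const>\<open>inum\<close>, with the proximities counted only up to
  level \<open>m\<close>, is the intersection number of the strict transforms on \<open>X\<^sub>m\<close>.\<close>

lemma inum_level_eq_blow_adj:
  assumes v: "valid_blowups prox N"
  shows "m \<le> Suc N \<Longrightarrow> \<mu> \<in> {1..<m} \<Longrightarrow> \<nu> \<in> {1..<m} \<Longrightarrow> \<mu> \<noteq> \<nu> \<Longrightarrow>
    (if prox \<nu> \<mu> \<or> prox \<mu> \<nu> then 1 else 0) - int (card {\<alpha>\<in>{1..<m}. prox \<alpha> \<mu> \<and> prox \<alpha> \<nu>})
     = (if blow_adj prox m \<mu> \<nu> then 1 else (0::int))"
proof (induction m arbitrary: \<mu> \<nu>)
  case 0 then show ?case by simp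
next
  case (Suc m)
  have m1: "1 \<le> m" using Suc.prems by auto
  show ?case
  proof (cases "\<mu> < m \<and> \<nu> < m")
    case True
    have IH: "(if prox \<nu> \<mu> \<or> prox \<mu> \<nu> then 1 else 0) - int (card {\<alpha>\<in>{1..<m}. prox \<alpha> \<mu> \<and> prox \<alpha> \<nu>})
      = (if blow_adj prox m \<mu> \<nu> then 1 else (0::int))"
      using Suc True by auto
    have "prox m \<mu> \<and> prox m \<nu> \<Longrightarrow> blow_adj prox m \<mu> \<nu>"
      using prox_two_blow_adj[OF v] Suc.prems by blast
    moreover have "card {\<alpha>\<in>{1..<Suc m}. prox \<alpha> \<mu> \<and> prox \<alpha> \<nu>}
      = card {\<alpha>\<in>{1..<m}. prox \<alpha> \<mu> \<and> prox \<alpha> \<nu>} + (if prox m \<mu> \<and> prox m \<nu> then 1 else 0)"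
      using card_filter_atLeastLessThan_Suc[of m] m1 by simp
    moreover have "blow_adj prox (Suc m) \<mu> \<nu> \<longleftrightarrow> blow_adj prox m \<mu> \<nu> \<and> \<not> (prox m \<mu> \<and> prox m \<nu>)"
      using True by (simp add: blow_adj_Suc[OF m1])
    ultimately show ?thesis using IH by (cases "prox m \<mu> \<and> prox m \<nu>") simp_all
  next
    case False
    then have c: "\<mu> = m \<and> \<nu> < m \<or> \<nu> = m \<and> \<mu> < m" using Suc.prems by auto
    then have "{\<alpha>\<in>{1..<Suc m}. prox \<alpha> \<mu> \<and> prox \<alpha> \<nu>} = {}"
      using prox_bounds[OF v] by fastforce
    moreover have "\<not> prox \<nu> \<mu>" if "\<mu> = m" using that prox_bounds[OF v] c by force
    moreover have "\<not> prox \<mu> \<nu>" if "\<nu> = m" using that prox_bounds[OF v] c by force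
    ultimately show ?thesis using c by (auto simp: blow_adj_Suc[OF m1])
  qed
qed

lemma inum_off_diagonal:
  assumes v: "valid_blowups prox N" and "\<mu> \<in> {1..N}" "\<nu> \<in> {1..N}" "\<mu> \<noteq> \<nu>"
  shows "inum prox N \<mu> \<nu> = (if dual_adj prox N \<mu> \<nu> then 1 else 0)"
proof -
  have "{1..<Suc N} = {1..N}" by auto
  then show ?thesis using inum_level_eq_blow_adj[OF v, of "Suc N" \<mu> \<nu>] assms
    unfolding inum_def dual_adj_def by auto
qed

lemma inum_proximity:
  assumes v: "valid_blowups prox N"
  shows "inum prox N \<mu> \<nu> = - (if \<mu> = \<nu> then 1 else 0) + (if prox \<nu> \<mu> then 1 else 0)
     + (if prox \<mu> \<nu> then 1 else 0) - int (card {\<alpha>\<in>{1..N}. prox \<alpha> \<mu> \<and> prox \<alpha> \<nu>})"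
  using prox_bounds[OF v, of \<mu> \<nu>] prox_bounds[OF v, of \<nu> \<mu>] unfolding inum_def by auto

lemma sum_mult_inum_eq:
  fixes h :: "nat \<Rightarrow> 'a::comm_ring_1"
  assumes v: "valid_blowups prox N" and nu: "\<nu> \<in> {1..N}"
  shows "(\<Sum>\<gamma>\<in>{1..N}. h \<gamma> * of_int (inum prox N \<gamma> \<nu>))
    = h \<nu> * of_int (inum prox N \<nu> \<nu>) + (\<Sum>\<gamma>\<in>{\<gamma>\<in>{1..N}. dual_adj prox N \<nu> \<gamma>}. h \<gamma>)"
proof -
  have "(\<Sum>\<gamma>\<in>{1..N}-{\<nu>}. h \<gamma> * of_int (inum prox N \<gamma> \<nu>))
      = (\<Sum>\<gamma>\<in>{1..N}-{\<nu>}. if dual_adj prox N \<nu> \<gamma> then h \<gamma> else 0)"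
    using nu by (intro sum.cong refl) (auto simp: inum_off_diagonal[OF v] dual_adj_sym)
  also have "\<dots> = (\<Sum>\<gamma>\<in>{\<gamma>\<in>{1..N}. dual_adj prox N \<nu> \<gamma>}. h \<gamma>)"
    by (simp add: sum.inter_filter[symmetric]) (intro sum.cong, auto simp: dual_adj_def)
  finally show ?thesis using nu by (simp add: sum.remove)
qed

lemma sum_inum_eq_valence:
  assumes v: "valid_blowups prox N" and nu: "\<nu> \<in> {1..N}"
  shows "(\<Sum>\<gamma>\<in>{1..N}. inum prox N \<gamma> \<nu>) = inum prox N \<nu> \<nu> + int (valence prox N \<nu>)"
  using sum_mult_inum_eq[OF v nu, of "\<lambda>_. 1 :: int"] unfolding valence_def by simp

declare estar.simps[simp del]

lemma estar_unfold:
  "\<rho> \<le> N \<Longrightarrow> estar prox N \<rho> \<gamma> = (if \<gamma> = \<rho> then 1 else 0) +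
     (\<Sum>\<alpha>\<in>{\<alpha>. \<rho> < \<alpha> \<and> \<alpha> \<le> N \<and> prox \<alpha> \<rho>}. estar prox N \<alpha> \<gamma>)"
  by (subst estar.simps) simp

lemma dotE_estar:
  assumes v: "valid_blowups prox N" and nu: "\<nu> \<in> {1..N}"
  shows "\<rho> \<in> {1..N} \<Longrightarrow>
    dotE prox N (estar prox N \<rho>) \<nu> = - (if \<rho> = \<nu> then 1 else 0) + (if prox \<rho> \<nu> then 1 else 0)"
proof (induction "N - \<rho>" arbitrary: \<rho> rule: less_induct)
  case less
  define A where "A = {\<alpha>\<in>{1..N}. prox \<alpha> \<rho>}"
  have A_eq: "{\<alpha>. \<rho> < \<alpha> \<and> \<alpha> \<le> N \<and> prox \<alpha> \<rho>} = A"
    using less.prems prox_bounds[OF v] unfolding A_def by fastforce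
  have IH: "\<alpha> \<in> A \<Longrightarrow> dotE prox N (estar prox N \<alpha>) \<nu>
      = - (if \<alpha> = \<nu> then 1 else 0) + (if prox \<alpha> \<nu> then 1 else 0)" for \<alpha>
    using less.hyps[of \<alpha>] less.prems prox_bounds[OF v, of \<alpha> \<rho>] unfolding A_def by auto
  have "dotE prox N (estar prox N \<rho>) \<nu>
     = (\<Sum>\<mu>\<in>{1..N}. (if \<mu> = \<rho> then inum prox N \<mu> \<nu> else 0) +
          (\<Sum>\<alpha>\<in>A. estar prox N \<alpha> \<mu> * inum prox N \<mu> \<nu>))"
    unfolding dotE_def using less.prems
    by (intro sum.cong refl) (simp add: estar_unfold[of \<rho> N] A_eq sum_distrib_right distrib_right)
  also have "\<dots> = inum prox N \<rho> \<nu> + (\<Sum>\<alpha>\<in>A. dotE prox N (estar prox N \<alpha>) \<nu>)"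
    unfolding dotE_def using less.prems by (simp add: sum.distrib sum.swap[of _ A])
  also have "\<dots> = inum prox N \<rho> \<nu> + (\<Sum>\<alpha>\<in>A. - (if \<alpha> = \<nu> then 1 else 0) + (if prox \<alpha> \<nu> then 1 else 0))"
    using IH by simp
  also have "\<dots> = inum prox N \<rho> \<nu> - (if \<nu> \<in> A then 1 else 0) + int (card {\<alpha>\<in>A. prox \<alpha> \<nu>})"
    by (simp add: sum_subtractf sum_if_one_eq_card A_def)
  also have "\<dots> = - (if \<rho> = \<nu> then 1 else 0) + (if prox \<rho> \<nu> then 1 else 0)"
    using nu unfolding A_def
    by (simp add: inum_proximity[OF v] conj_commute)
  finally show ?case .
qed

lemma dotE_kcoef:
  assumes v: "valid_blowups prox N" and nu: "\<nu> \<in> {1..N}"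
  shows "dotE prox N (kcoef prox N) \<nu> = - 2 - inum prox N \<nu> \<nu>"
proof -
  have "dotE prox N (kcoef prox N) \<nu> = (\<Sum>\<rho>\<in>{1..N}. dotE prox N (estar prox N \<rho>) \<nu>)"
    unfolding dotE_def kcoef_def sum_distrib_right by (rule sum.swap)
  also have "\<dots> = (\<Sum>\<rho>\<in>{1..N}. - (if \<rho> = \<nu> then 1 else 0) + (if prox \<rho> \<nu> then 1 else 0))"
    using dotE_estar[OF v nu] by simp
  also have "\<dots> = -1 + int (card {\<rho>\<in>{1..N}. prox \<rho> \<nu>})"
    using nu by (simp add: sum_subtractf sum_if_one_eq_card)
  also have "\<dots> = - 2 - inum prox N \<nu> \<nu>"
    unfolding inum_def by simp
  finally show ?thesis .
qed

lemma dotE_add_kcoef_one: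
  assumes v: "valid_blowups prox N" and nu: "\<nu> \<in> {1..N}"
  shows "dotE prox N (\<lambda>\<gamma>. F \<gamma> + kcoef prox N \<gamma> + 1) \<nu> = dotE prox N F \<nu> - 2 + int (valence prox N \<nu>)"
proof -
  have "dotE prox N (\<lambda>\<gamma>. F \<gamma> + kcoef prox N \<gamma> + 1) \<nu>
     = dotE prox N F \<nu> + dotE prox N (kcoef prox N) \<nu> + (\<Sum>\<gamma>\<in>{1..N}. inum prox N \<gamma> \<nu>)"
    unfolding dotE_def by (simp add: distrib_right sum.distrib)
  then show ?thesis using dotE_kcoef[OF v nu] sum_inum_eq_valence[OF v nu] by simp
qed

section \<open>Antinef divisors have positive coefficients\<close>

text \<open>\<open>tcoef prox N D \<gamma>\<close> is the coefficient of \<open>E\<^sup>*\<^sub>\<gamma>\<close> when \<open>D\<close> is written in the basis of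
  total transforms, i.e. the weight of the point \<open>p\<^sub>\<gamma>\<close> in the cluster of \<open>D\<close>.\<close>

definition tcoef :: "(nat \<Rightarrow> nat \<Rightarrow> bool) \<Rightarrow> nat \<Rightarrow> (nat \<Rightarrow> int) \<Rightarrow> nat \<Rightarrow> int" where
  "tcoef prox N D \<gamma> = D \<gamma> - (\<Sum>j\<in>{1..N}. if prox \<gamma> j then D j else 0)"

lemma sum_if_diff:
  "(\<Sum>x\<in>A. if P x then a x - b x else 0) = (\<Sum>x\<in>A. if P x then a x else 0) - (\<Sum>x\<in>A. if P x then b x else (0::int))"
  by (auto simp add: sum_subtractf[symmetric] intro!: sum.cong)

lemma dotE_tcoef:
  assumes v: "valid_blowups prox N" and nu: "\<nu> \<in> {1..N}"
  shows "dotE prox N D \<nu> = - tcoef prox N D \<nu> + (\<Sum>\<alpha>\<in>{1..N}. if prox \<alpha> \<nu> then tcoef prox N D \<alpha> else 0)"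
proof -
  let ?I = "{1..N}"
  have "dotE prox N D \<nu> = (\<Sum>\<mu>\<in>?I. D \<mu> * (- (if \<mu> = \<nu> then 1 else 0) + (if prox \<nu> \<mu> then 1 else 0)
     + (if prox \<mu> \<nu> then 1 else 0) - (\<Sum>\<alpha>\<in>?I. if prox \<alpha> \<mu> \<and> prox \<alpha> \<nu> then 1 else 0)))"
    unfolding dotE_def by (intro sum.cong refl) (simp add: inum_proximity[OF v] sum_if_one_eq_card)
  also have "\<dots> = (\<Sum>\<mu>\<in>?I. - (if \<mu> = \<nu> then D \<mu> else 0) + (if prox \<nu> \<mu> then D \<mu> else 0)
     + (if prox \<mu> \<nu> then D \<mu> else 0) - (\<Sum>\<alpha>\<in>?I. if prox \<alpha> \<mu> \<and> prox \<alpha> \<nu> then D \<mu> else 0))"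
    by (intro sum.cong refl) (simp add: algebra_simps sum_distrib_left if_distrib cong: if_cong)
  also have "\<dots> = - D \<nu> + (\<Sum>\<mu>\<in>?I. if prox \<nu> \<mu> then D \<mu> else 0) + (\<Sum>\<mu>\<in>?I. if prox \<mu> \<nu> then D \<mu> else 0)
      - (\<Sum>\<mu>\<in>?I. \<Sum>\<alpha>\<in>?I. if prox \<alpha> \<mu> \<and> prox \<alpha> \<nu> then D \<mu> else 0)"
    using nu by (simp add: sum.distrib sum_subtractf sum_negf)
  also have "(\<Sum>\<mu>\<in>?I. \<Sum>\<alpha>\<in>?I. if prox \<alpha> \<mu> \<and> prox \<alpha> \<nu> then D \<mu> else 0)
      = (\<Sum>\<alpha>\<in>?I. if prox \<alpha> \<nu> then (\<Sum>\<mu>\<in>?I. if prox \<alpha> \<mu> then D \<mu> else 0) else 0)"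
    by (subst sum.swap) (intro sum.cong refl, auto)
  finally show ?thesis
    unfolding tcoef_def by (simp add: sum_if_diff)
qed

lemma proximity_inequality:
  assumes v: "valid_blowups prox N" and a: "antinef prox N D" and nu: "\<nu> \<in> {1..N}"
  shows "(\<Sum>\<alpha>\<in>{1..N}. if prox \<alpha> \<nu> then tcoef prox N D \<alpha> else 0) \<le> tcoef prox N D \<nu>"
  using a nu dotE_tcoef[OF v nu, of D] unfolding antinef_def by fastforce

lemma tcoef_nonneg:
  assumes v: "valid_blowups prox N" and a: "antinef prox N D"
  shows "\<nu> \<in> {1..N} \<Longrightarrow> 0 \<le> tcoef prox N D \<nu>"
proof (induction "N - \<nu>" arbitrary: \<nu> rule: less_induct)
  case less
  have "0 \<le> (\<Sum>\<alpha>\<in>{1..N}. if prox \<alpha> \<nu> then tcoef prox N D \<alpha> else 0)"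
  proof (rule sum_nonneg)
    fix \<alpha> assume "\<alpha> \<in> {1..N}"
    then show "0 \<le> (if prox \<alpha> \<nu> then tcoef prox N D \<alpha> else 0)"
      using less prox_bounds[OF v, of \<alpha> \<nu>] by auto
  qed
  then show ?case using proximity_inequality[OF v a less.prems] by linarith
qed

lemma tcoef_prox_mono:
  assumes v: "valid_blowups prox N" and a: "antinef prox N D" and p: "prox \<gamma> j"
  shows "tcoef prox N D \<gamma> \<le> tcoef prox N D j"
proof -
  have g: "\<gamma> \<in> {1..N}" "j \<in> {1..N}" using prox_bounds[OF v p] by auto
  have "tcoef prox N D \<gamma> = (if prox \<gamma> j then tcoef prox N D \<gamma> else 0)" using p by simp
  also have "\<dots> \<le> (\<Sum>\<alpha>\<in>{1..N}. if prox \<alpha> j then tcoef prox N D \<alpha> else 0)"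
    by (rule member_le_sum[OF g(1)]) (auto intro: tcoef_nonneg[OF v a])
  also have "\<dots> \<le> tcoef prox N D j" by (rule proximity_inequality[OF v a g(2)])
  finally show ?thesis .
qed

lemma tcoef_le_first:
  assumes v: "valid_blowups prox N" and a: "antinef prox N D"
  shows "\<gamma> \<in> {1..N} \<Longrightarrow> tcoef prox N D \<gamma> \<le> tcoef prox N D 1"
proof (induction \<gamma> rule: less_induct)
  case (less \<gamma>)
  show ?case
  proof (cases "\<gamma> = 1")
    case False
    then obtain j where j: "prox \<gamma> j" using prox_ex[OF v, of \<gamma>] less.prems by auto
    then have "j < \<gamma>" "j \<in> {1..N}" using prox_bounds[OF v j] by auto
    then show ?thesis using less.IH tcoef_prox_mono[OF v a j] by force
  qed simp
qed

lemma zero_if_tcoef_zero: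
  assumes v: "valid_blowups prox N" and z: "\<And>\<gamma>. \<gamma> \<in> {1..N} \<Longrightarrow> tcoef prox N D \<gamma> = 0"
  shows "\<gamma> \<in> {1..N} \<Longrightarrow> D \<gamma> = 0"
proof (induction \<gamma> rule: less_induct)
  case (less \<gamma>)
  have "(\<Sum>j\<in>{1..N}. if prox \<gamma> j then D j else 0) = 0"
    by (intro sum.neutral) (auto dest: prox_bounds[OF v] intro: less.IH)
  then show ?case using z[OF less.prems] unfolding tcoef_def by simp
qed

lemma tcoef_first_le:
  assumes v: "valid_blowups prox N" and a: "antinef prox N D"
  shows "\<gamma> \<in> {1..N} \<Longrightarrow> tcoef prox N D 1 \<le> D \<gamma>"
proof (induction \<gamma> rule: less_induct)
  case (less \<gamma>)
  have t1: "0 \<le> tcoef prox N D 1" using tcoef_nonneg[OF v a] less.prems by auto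
  show ?case
  proof (cases "\<gamma> = 1")
    case True
    have "(\<Sum>j\<in>{1..N}. if prox 1 j then D j else 0) = 0"
      by (intro sum.neutral) (auto dest: prox_bounds[OF v])
    then show ?thesis using True unfolding tcoef_def by simp
  next
    case False
    then obtain j where j: "prox \<gamma> j" using prox_ex[OF v, of \<gamma>] less.prems by auto
    then have jI: "j \<in> {1..N}" using prox_bounds[OF v j] by auto
    have nonneg: "0 \<le> (if prox \<gamma> x then D x else 0)" if "x \<in> {1..N}" for x
      using less.IH[of x] prox_bounds[OF v, of \<gamma> x] that t1 by force
    have "tcoef prox N D 1 \<le> D j" using less.IH j jI prox_bounds[OF v j] by auto
    also have "\<dots> \<le> (\<Sum>x\<in>{1..N}. if prox \<gamma> x then D x else 0)"
      using member_le_sum[OF jI, of "\<lambda>x. if prox \<gamma> x then D x else 0"] nonneg j by simp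
    also have "\<dots> \<le> D \<gamma>" using tcoef_nonneg[OF v a less.prems] unfolding tcoef_def by linarith
    finally show ?thesis .
  qed
qed

lemma antinef_coeff_pos:
  assumes v: "valid_blowups prox N" and a: "antinef prox N D" and nz: "\<exists>\<nu>\<in>{1..N}. D \<nu> \<noteq> 0"
    and \<gamma>: "\<gamma> \<in> {1..N}"
  shows "0 < D \<gamma>"
proof -
  have "tcoef prox N D 1 \<noteq> 0"
  proof
    assume "tcoef prox N D 1 = 0"
    then have "\<And>\<gamma>. \<gamma> \<in> {1..N} \<Longrightarrow> tcoef prox N D \<gamma> = 0"
      using tcoef_le_first[OF v a] tcoef_nonneg[OF v a] by (metis order.antisym)
    then show False using zero_if_tcoef_zero[OF v] nz by blast
  qed
  moreover have "0 \<le> tcoef prox N D 1" using tcoef_nonneg[OF v a] \<gamma> by auto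
  ultimately show ?thesis using tcoef_first_le[OF v a \<gamma>] by linarith
qed

section \<open>The dual graph is a connected graph with a leaf\<close>

text \<open>\<open>adj_closed prox m T\<close>: \<open>T \<subseteq> {1..m}\<close> is a union of connected components of the
  configuration of the strict transforms of \<open>E\<^sub>1, \<dots>, E\<^sub>m\<close> on \<open>X\<^sub>m\<^sub>+\<^sub>1\<close>.\<close>

definition adj_closed :: "(nat \<Rightarrow> nat \<Rightarrow> bool) \<Rightarrow> nat \<Rightarrow> nat set \<Rightarrow> bool" where
  "adj_closed prox m T \<longleftrightarrow> (\<forall>j\<in>T. \<forall>k\<in>{1..m}. blow_adj prox (Suc m) j k \<longrightarrow> k \<in> T)"

lemma blow_adj_new_divisor:
  "1 \<le> i \<Longrightarrow> j < i \<Longrightarrow> prox i j \<Longrightarrow> blow_adj prox (Suc i) i j \<and> blow_adj prox (Suc i) j i"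
  by (simp add: blow_adj_Suc)

lemma adj_closed_Diff_last:
  assumes m: "1 \<le> m" and T: "T \<subseteq> {1..Suc m}" and cl: "adj_closed prox (Suc m) T"
  shows "adj_closed prox m (T - {Suc m})"
  unfolding adj_closed_def
proof (intro ballI impI)
  fix j k assume j: "j \<in> T - {Suc m}" and k: "k \<in> {1..m}" and b: "blow_adj prox (Suc m) j k"
  have jk: "j < Suc m" "k < Suc m" "j \<in> T" using j T k by auto
  have step: "k' \<in> T" if "j' \<in> T" "k' \<in> {1..Suc m}" "blow_adj prox (Suc (Suc m)) j' k'" for j' k'
    using cl that unfolding adj_closed_def by blast
  have "k \<in> T"
  proof (cases "prox (Suc m) j \<and> prox (Suc m) k")
    case False
    then show ?thesis using step[OF jk(3)] b jk k by (auto simp: blow_adj_Suc)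
  next
    case True
    \<comment> \<open>blowing up \<open>p\<^sub>m\<^sub>+\<^sub>1\<close> separates \<open>E\<^sub>j\<close> and \<open>E\<^sub>k\<close>, but both then meet \<open>E\<^sub>m\<^sub>+\<^sub>1\<close>\<close>
    then have "Suc m \<in> T" using step[OF jk(3)] blow_adj_new_divisor[of "Suc m" j prox] jk by auto
    then show ?thesis using step blow_adj_new_divisor[of "Suc m" k prox] True jk k by auto
  qed
  then show "k \<in> T - {Suc m}" using k by auto
qed

lemma adj_closed_eq_all:
  assumes v: "valid_blowups prox N"
  shows "m \<le> N \<Longrightarrow> T \<subseteq> {1..m} \<Longrightarrow> T \<noteq> {} \<Longrightarrow> adj_closed prox m T \<Longrightarrow> T = {1..m}"
proof (induction m arbitrary: T)
  case 0 then show ?case by auto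
next
  case (Suc m)
  show ?case
  proof (cases "m = 0")
    case True then show ?thesis using Suc.prems by auto
  next
    case False
    then have m: "1 \<le> m" by simp
    obtain j where j: "prox (Suc m) j" using prox_ex[OF v, of "Suc m"] False Suc.prems(1) by auto
    then have jm: "j \<in> {1..m}" using prox_bounds[OF v j] by auto
    have step: "k \<in> T" if "i \<in> T" "k \<in> {1..Suc m}" "blow_adj prox (Suc (Suc m)) i k" for i k
      using Suc.prems(4) that unfolding adj_closed_def by blast
    have adj: "blow_adj prox (Suc (Suc m)) (Suc m) j" "blow_adj prox (Suc (Suc m)) j (Suc m)"
      using blow_adj_new_divisor[of "Suc m" j prox] j jm by auto
    have "T - {Suc m} \<noteq> {}"
    proof
      assume "T - {Suc m} = {}"
      then have "T = {Suc m}" using Suc.prems(3) by blast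
      moreover have "j \<in> {1..Suc m}" using jm by simp
      ultimately have "j \<in> T" using step[of "Suc m" j] adj(1) by blast
      then show False using \<open>T = {Suc m}\<close> jm by simp
    qed
    moreover have "T - {Suc m} \<subseteq> {1..m}" using Suc.prems(2) by auto
    ultimately have T': "T - {Suc m} = {1..m}"
      using Suc.IH adj_closed_Diff_last[OF m Suc.prems(2,4)] Suc.prems(1) by simp
    then have "j \<in> T" using jm by blast
    then have "Suc m \<in> T" using step[of j "Suc m"] adj(2) by simp
    then have "T = insert (Suc m) {1..m}" using T' by blast
    then show ?thesis by (auto simp: le_Suc_eq)
  qed
qed

lemma dual_graph_connected:
  assumes v: "valid_blowups prox N" and "T \<subseteq> {1..N}" "T \<noteq> {}"
    and cl: "\<And>j k. j \<in> T \<Longrightarrow> k \<in> {1..N} \<Longrightarrow> dual_adj prox N j k \<Longrightarrow> k \<in> T"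
  shows "T = {1..N}"
proof (rule adj_closed_eq_all[OF v order_refl assms(2,3)])
  show "adj_closed prox N T"
    unfolding adj_closed_def
  proof (intro ballI impI)
    fix j k assume "j \<in> T" "k \<in> {1..N}" "blow_adj prox (Suc N) j k"
    then show "k \<in> T" using cl[of j k] unfolding dual_adj_def by (cases "j = k") auto
  qed
qed

lemma finite_blow_adj: "finite {k. blow_adj prox m x k}"
  using blow_adj_less by (metis finite_lessThan finite_subset lessThan_iff mem_Collect_eq subsetI)

lemma card_blow_adj_new_divisor:
  assumes v: "valid_blowups prox N" and i: "i \<in> {1..N}" and "i = 1 \<or> free_point prox i"
  shows "card {k. blow_adj prox (Suc i) i k} \<le> 1"
proof -
  obtain j where "{k. k < i \<and> prox i k} \<subseteq> {j}"
    using assms(3) prox_bounds[OF v, of 1] unfolding free_point_def by blast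
  moreover have "{k. blow_adj prox (Suc i) i k} = {k. k < i \<and> prox i k}"
    using i by (auto simp: blow_adj_Suc)
  ultimately show ?thesis using card_mono[of "{j}"] by fastforce
qed

text \<open>Blowing up a satellite point does not increase the number of neighbours of an older
  component: if \<open>p\<^sub>m\<close> lies on \<open>E\<^sub>x\<close> and \<open>E\<^sub>y\<close>, the neighbour \<open>y\<close> of \<open>x\<close> is traded for \<open>m\<close>.\<close>

lemma card_blow_adj_satellite:
  assumes v: "valid_blowups prox N" and m: "m \<in> {2..N}" "\<not> free_point prox m" and x: "x < m"
  shows "card {k. blow_adj prox (Suc m) x k} \<le> card {k. blow_adj prox m x k}"
proof -
  obtain a b where ab: "a \<noteq> b" "{j'. prox m j'} = {a, b}"
    using free_or_satellite[OF v m] by metis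
  have m1: "1 \<le> m" using m by simp
  show ?thesis
  proof (cases "prox m x")
    case True
    define y where "y = (if x = a then b else a)"
    have y: "prox m y" "y \<noteq> x" using ab True unfolding y_def by auto
    have yx: "y \<in> {k. blow_adj prox m x k}"
      using prox_two_blow_adj[OF v True y(1)] y(2) by auto
    have "{k. blow_adj prox (Suc m) x k} \<subseteq> insert m ({k. blow_adj prox m x k} - {y})"
    proof
      fix k assume "k \<in> {k. blow_adj prox (Suc m) x k}"
      then have "(k < m \<and> blow_adj prox m x k \<and> \<not> prox m k) \<or> k = m"
        using blow_adj_Suc[OF m1, of prox x k] True x by blast
      then show "k \<in> insert m ({k. blow_adj prox m x k} - {y})" using y by auto
    qed
    then have "card {k. blow_adj prox (Suc m) x k} \<le> card (insert m ({k. blow_adj prox m x k} - {y}))"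
      by (rule card_mono[rotated]) (simp add: finite_blow_adj)
    also have "\<dots> \<le> Suc (card ({k. blow_adj prox m x k} - {y}))" by (rule card_insert_le_m1) auto
    also have "\<dots> = card {k. blow_adj prox m x k}"
      by (rule card_Suc_Diff1[OF finite_blow_adj yx])
    finally show ?thesis .
  next
    case False
    have "{k. blow_adj prox (Suc m) x k} \<subseteq> {k. blow_adj prox m x k}"
      using blow_adj_Suc[OF m1, of prox x] False x by blast
    then show ?thesis by (rule card_mono[OF finite_blow_adj])
  qed
qed

text \<open>The component created by the last free point (or \<open>E\<^sub>1\<close>) is a leaf, since all later
  points are satellites.\<close>

lemma dual_graph_has_leaf:
  assumes v: "valid_blowups prox N" and N: "1 \<le> N"
  obtains l where "l \<in> {1..N}" "valence prox N l \<le> 1"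
proof -
  define Fr where "Fr = insert 1 {i\<in>{2..N}. free_point prox i}"
  define l where "l = Max Fr"
  have Fr: "finite Fr" "Fr \<noteq> {}" unfolding Fr_def by simp_all
  have l: "l \<in> Fr" unfolding l_def by (rule Max_in[OF Fr])
  have l_max: "\<And>i. i \<in> Fr \<Longrightarrow> i \<le> l" unfolding l_def using Fr(1) by simp
  have lN: "l \<in> {1..N}" "l = 1 \<or> free_point prox l" using l N unfolding Fr_def by auto
  have "card {k. blow_adj prox m l k} \<le> 1" if "Suc l \<le> m" "m \<le> Suc N" for m
    using that
  proof (induction m rule: dec_induct)
    case base
    then show ?case using card_blow_adj_new_divisor[OF v lN] by simp
  next
    case (step m)
    have "m \<in> {2..N}" "\<not> free_point prox m" "l < m"
      using step.hyps step.prems lN l_max[of m] unfolding Fr_def by auto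
    then show ?case using card_blow_adj_satellite[OF v] step by (meson le_trans Suc_leD)
  qed
  then have "card {k. blow_adj prox (Suc N) l k} \<le> 1" using lN by simp
  moreover have "valence prox N l \<le> card {k. blow_adj prox (Suc N) l k}"
    unfolding valence_def dual_adj_def by (rule card_mono[OF finite_blow_adj]) auto
  ultimately show ?thesis using that lN by simp
qed

section \<open>Where \<open>\<lambda>(F, D; -)\<close> attains its minimum\<close>

lemma lam_min_propagates:
  assumes v: "valid_blowups prox N" and aD: "antinef prox N D" and aF: "antinef prox N F"
    and D_pos: "\<And>\<gamma>. \<gamma> \<in> {1..N} \<Longrightarrow> 0 < D \<gamma>"
    and lower: "\<And>\<gamma>. \<gamma> \<in> {1..N} \<Longrightarrow> \<xi> \<le> lam prox N F D \<gamma>"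
    and nu: "\<nu> \<in> {1..N}" "lam prox N F D \<nu> = \<xi>"
    and val: "valence prox N \<nu> \<le> 2" and dhat: "dhat prox N D \<nu> \<le> 0"
  shows "valence prox N \<nu> = 2"
    and "\<And>\<gamma>. \<gamma> \<in> {1..N} \<Longrightarrow> dual_adj prox N \<nu> \<gamma> \<Longrightarrow> lam prox N F D \<gamma> = \<xi>"
proof -
  define h where "h \<gamma> = real_of_int (F \<gamma> + kcoef prox N \<gamma> + 1) - \<xi> * real_of_int (D \<gamma>)" for \<gamma>
  have h_zero_iff: "h \<gamma> = 0 \<longleftrightarrow> lam prox N F D \<gamma> = \<xi>" if "\<gamma> \<in> {1..N}" for \<gamma>
    using D_pos[OF that] unfolding lam_def h_def by (auto simp: field_simps)
  have h_nonneg: "0 \<le> h \<gamma>" if "\<gamma> \<in> {1..N}" for \<gamma>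
    using D_pos[OF that] lower[OF that] unfolding lam_def h_def by (auto simp: field_simps)
  define A where "A = {\<gamma>\<in>{1..N}. dual_adj prox N \<nu> \<gamma>}"
  have "dotE prox N D \<nu> = 0"
    using aD nu(1) dhat unfolding antinef_def dhat_def by fastforce
  moreover have "(\<Sum>\<gamma>\<in>{1..N}. h \<gamma> * real_of_int (inum prox N \<gamma> \<nu>))
      = real_of_int (dotE prox N (\<lambda>\<gamma>. F \<gamma> + kcoef prox N \<gamma> + 1) \<nu>) - \<xi> * real_of_int (dotE prox N D \<nu>)"
    unfolding h_def dotE_def
    by (simp add: left_diff_distrib sum_subtractf sum_distrib_left mult.assoc)
  ultimately have sum_A: "(\<Sum>\<gamma>\<in>A. h \<gamma>) = real_of_int (dotE prox N F \<nu> - 2 + int (valence prox N \<nu>))"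
    using sum_mult_inum_eq[OF v nu(1), of h] h_zero_iff[OF nu(1)] nu(2) dotE_add_kcoef_one[OF v nu(1)]
    unfolding A_def by simp
  have A_nonneg: "0 \<le> (\<Sum>\<gamma>\<in>A. h \<gamma>)" using h_nonneg unfolding A_def by (intro sum_nonneg) auto
  have "dotE prox N F \<nu> \<le> 0" using aF nu(1) unfolding antinef_def by blast
  then show "valence prox N \<nu> = 2" using sum_A A_nonneg val by linarith
  then have "(\<Sum>\<gamma>\<in>A. h \<gamma>) = 0" using sum_A A_nonneg \<open>dotE prox N F \<nu> \<le> 0\<close> by linarith
  then have "\<forall>\<gamma>\<in>A. h \<gamma> = 0"
    using sum_nonneg_eq_0_iff[of A h] h_nonneg unfolding A_def by auto
  then show "\<And>\<gamma>. \<gamma> \<in> {1..N} \<Longrightarrow> dual_adj prox N \<nu> \<gamma> \<Longrightarrow> lam prox N F D \<gamma> = \<xi>"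
    using h_zero_iff unfolding A_def by blast
qed

lemma lam_min_at_star_or_dhat_pos:
  assumes v: "valid_blowups prox N" and aD: "antinef prox N D" and nz: "\<exists>\<nu>\<in>{1..N}. D \<nu> \<noteq> 0"
    and aF: "antinef prox N F"
  shows "\<exists>\<nu>\<in>{1..N}. lam prox N F D \<nu> = xi prox N F D \<and>
           (3 \<le> valence prox N \<nu> \<or> dhat prox N D \<nu> > 0)"
proof (rule ccontr)
  assume none: "\<not> ?thesis"
  define S where "S = {\<nu>\<in>{1..N}. lam prox N F D \<nu> = xi prox N F D}"
  have N: "1 \<le> N" using nz by auto
  then have fin: "finite (lam prox N F D ` {1..N})" "lam prox N F D ` {1..N} \<noteq> {}" by auto
  have lower: "\<And>\<gamma>. \<gamma> \<in> {1..N} \<Longrightarrow> xi prox N F D \<le> lam prox N F D \<gamma>"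
    unfolding xi_def by (rule Min_le[OF fin(1)]) simp
  have "xi prox N F D \<in> lam prox N F D ` {1..N}" unfolding xi_def by (rule Min_in[OF fin])
  then have "S \<noteq> {}" unfolding S_def by auto
  have propagates: "valence prox N \<nu> = 2 \<and> (\<forall>\<gamma>\<in>{1..N}. dual_adj prox N \<nu> \<gamma> \<longrightarrow> \<gamma> \<in> S)"
    if "\<nu> \<in> S" for \<nu>
  proof -
    have \<nu>: "\<nu> \<in> {1..N}" "lam prox N F D \<nu> = xi prox N F D" using that unfolding S_def by auto
    then have "valence prox N \<nu> \<le> 2" "dhat prox N D \<nu> \<le> 0" using none by auto
    note lam_min_propagates[OF v aD aF antinef_coeff_pos[OF v aD nz] lower \<nu> this]
    then show ?thesis unfolding S_def by blast
  qed
  have "S = {1..N}"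
  proof (rule dual_graph_connected[OF v _ \<open>S \<noteq> {}\<close>])
    show "S \<subseteq> {1..N}" unfolding S_def by auto
    show "\<And>j k. j \<in> S \<Longrightarrow> k \<in> {1..N} \<Longrightarrow> dual_adj prox N j k \<Longrightarrow> k \<in> S"
      using propagates by blast
  qed
  moreover obtain l where "l \<in> {1..N}" "valence prox N l \<le> 1" using dual_graph_has_leaf[OF v N] .
  ultimately show False using propagates[of l] by simp
qed

theorem mainTheorem13:
  fixes prox :: "nat \<Rightarrow> nat \<Rightarrow> bool" and N :: nat and D F :: "nat \<Rightarrow> int"
  assumes "valid_blowups prox N"
    and "antinef prox N D" and "\<exists>\<nu>\<in>{1..N}. D \<nu> \<noteq> 0"
    and "antinef prox N F"
  shows "(\<exists>\<nu>\<in>{1..N}. lam prox N F D \<nu> = xi prox N F D \<and>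
            (3 \<le> valence prox N \<nu> \<or> dhat prox N D \<nu> > 0))
       \<and> (\<forall>\<xi>\<in>jumping_numbers prox N D. \<exists>\<nu>\<in>{1..N}.
            (3 \<le> valence prox N \<nu> \<or> dhat prox N D \<nu> > 0) \<and> \<xi> \<in> Hset prox N D \<nu>)"
proof
  show "\<exists>\<nu>\<in>{1..N}. lam prox N F D \<nu> = xi prox N F D \<and>
          (3 \<le> valence prox N \<nu> \<or> dhat prox N D \<nu> > 0)"
    using lam_min_at_star_or_dhat_pos[OF assms] .
  show "\<forall>\<xi>\<in>jumping_numbers prox N D. \<exists>\<nu>\<in>{1..N}.
          (3 \<le> valence prox N \<nu> \<or> dhat prox N D \<nu> > 0) \<and> \<xi> \<in> Hset prox N D \<nu>"
  proof
    fix \<xi> assume "\<xi> \<in> jumping_numbers prox N D"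
    then obtain G where G: "antinef prox N G" "\<xi> = xi prox N G D"
      unfolding jumping_numbers_def by blast
    obtain \<nu> where \<nu>: "\<nu> \<in> {1..N}" "lam prox N G D \<nu> = xi prox N G D"
        "3 \<le> valence prox N \<nu> \<or> dhat prox N D \<nu> > 0"
      using lam_min_at_star_or_dhat_pos[OF assms(1-3) G(1)] by blast
    have "\<xi> \<in> Hset prox N D \<nu>" unfolding Hset_def using G \<nu>(2) by auto
    then show "\<exists>\<nu>\<in>{1..N}. (3 \<le> valence prox N \<nu> \<or> dhat prox N D \<nu> > 0) \<and> \<xi> \<in> Hset prox N D \<nu>"
      using \<nu> by blast
  qed
qed

end
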